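(* Let $R,S,T$ be $\mathfrak h$-modules and let $f:R\otimes S\to T$ be an (even) $\mathfrak h$-intertwiner, where $R\otimes S$ carries the tensor product action. There is a unique even linear map $Q_f:R\otimes\mathrm{Ind}(S)\to\mathrm{Ind}(T)$ such that (1) $Q_f(r\otimes s)=f(r\otimes s)$ for all $r\in R$, $s\in S$, and (2) for all $a\in\mathfrak h$, $m\in\mathbb Z$, $a_m\circ Q_f=Q_f\circ(\delta_{m,0}\,a\otimes\mathrm{id}+\mathrm{id}\otimes a_m)$.
   Context: Super vector spaces over $\mathbb C$, Koszul sign rule (e.g. $(\mathrm{id}\otimes a_m)(r\otimes v)=(-1)^{|a||r|}r\otimes a_mv$). $\mathfrak h$ is a nonzero finite-dimensional abelian Lie superalgebra with even non-degenerate supersymmetric form $(-,-)$; modes $a_m$ ($a\in\mathfrak h$, $m\in\mathbb Z$) satisfy $[a_m,b_n]=m(a,b)\delta_{m+n,0}K$ with $K$ central. For an $\mathfrak h$-module $S$, $\mathrm{Ind}(S)=U(\hat{\mathfrak h})\otimes_{U(\hat{\mathfrak h}_{\ge0}\oplus\mathbb CK)}S$, where $a_m$ ($m>0$) acts by $0$ on $S$, $a_0$ by $a$, and $K$ by $1$; $S\subset\mathrm{Ind}(S)$. *)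

theory Defs
  imports Complex_Main "HOL-Library.Function_Algebras"
begin

(* Complex super vector spaces: a type 'v with a complex scalar multiplication sc
   (a vector_space) together with the parity operator P (linear involution:
   P = id on the even part, P = -id on the odd part). *)

definition super_vs :: "(complex \<Rightarrow> 'v::ab_group_add \<Rightarrow> 'v) \<Rightarrow> ('v \<Rightarrow> 'v) \<Rightarrow> bool" where
  "super_vs sc P \<longleftrightarrow> vector_space sc \<and> Vector_Spaces.linear sc sc P \<and> (\<forall>x. P (P x) = x)"

definition homog :: "('v::ab_group_add \<Rightarrow> 'v) \<Rightarrow> 'v \<Rightarrow> bool" where
  "homog P x \<longleftrightarrow> P x = x \<or> P x = - x"

definition ksign :: "('v::ab_group_add \<Rightarrow> 'v) \<Rightarrow> 'v \<Rightarrow> 'v \<Rightarrow> complex" where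
  "ksign P a b = (if P a = - a \<and> P b = - b then -1 else 1)"

definition even_part :: "(complex \<Rightarrow> 'v::ab_group_add \<Rightarrow> 'v) \<Rightarrow> ('v \<Rightarrow> 'v) \<Rightarrow> 'v \<Rightarrow> 'v" where
  "even_part sc P x = sc (1/2) (x + P x)"

definition odd_part :: "(complex \<Rightarrow> 'v::ab_group_add \<Rightarrow> 'v) \<Rightarrow> ('v \<Rightarrow> 'v) \<Rightarrow> 'v \<Rightarrow> 'v" where
  "odd_part sc P x = sc (1/2) (x - P x)"

(* the data (h, (-,-)): nonzero finite-dimensional abelian Lie superalgebra with even
   non-degenerate supersymmetric bilinear form *)
definition heis_data :: "(complex \<Rightarrow> 'h::ab_group_add \<Rightarrow> 'h) \<Rightarrow> ('h \<Rightarrow> 'h) \<Rightarrow> ('h \<Rightarrow> 'h \<Rightarrow> complex) \<Rightarrow> bool" where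
  "heis_data sh Ph B \<longleftrightarrow>
     super_vs sh Ph \<and>
     (\<exists>Bs. finite Bs \<and> module.span sh Bs = UNIV) \<and>
     (\<exists>a::'h. a \<noteq> 0) \<and>
     (\<forall>b. Vector_Spaces.linear sh (*) (\<lambda>a. B a b)) \<and>
     (\<forall>a. Vector_Spaces.linear sh (*) (\<lambda>b. B a b)) \<and>
     (\<forall>a b. Ph a = a \<and> Ph b = - b \<longrightarrow> B a b = 0 \<and> B b a = 0) \<and>
     (\<forall>a b. homog Ph a \<and> homog Ph b \<longrightarrow> B a b = ksign Ph a b * B b a) \<and>
     (\<forall>a. (\<forall>b. B a b = 0) \<longrightarrow> a = 0)"

(* h-module: even action rho of the abelian Lie superalgebra h on a super vector space,
   i.e. rho([a,b]) = 0 = super-commutator of rho a, rho b *)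
definition h_module :: "(complex \<Rightarrow> 'h::ab_group_add \<Rightarrow> 'h) \<Rightarrow> ('h \<Rightarrow> 'h) \<Rightarrow>
    (complex \<Rightarrow> 'v::ab_group_add \<Rightarrow> 'v) \<Rightarrow> ('v \<Rightarrow> 'v) \<Rightarrow> ('h \<Rightarrow> 'v \<Rightarrow> 'v) \<Rightarrow> bool" where
  "h_module sh Ph sv Pv rho \<longleftrightarrow>
     super_vs sv Pv \<and>
     (\<forall>v. Vector_Spaces.linear sh sv (\<lambda>a. rho a v)) \<and>
     (\<forall>a. Vector_Spaces.linear sv sv (rho a)) \<and>
     (\<forall>a v. Pv (rho a v) = rho (Ph a) (Pv v)) \<and>
     (\<forall>a b v. homog Ph a \<and> homog Ph b \<longrightarrow> rho a (rho b v) = sv (ksign Ph a b) (rho b (rho a v)))"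

(* even h-intertwiner f : R (x) S -> T, represented (universal property of the tensor
   product) by a bilinear map; R (x) S carries a.(r (x) s) = a r (x) s + (-1)^{|a||r|} r (x) a s *)
definition even_intertwiner :: "(complex \<Rightarrow> 'h::ab_group_add \<Rightarrow> 'h) \<Rightarrow> ('h \<Rightarrow> 'h) \<Rightarrow>
    (complex \<Rightarrow> 'r::ab_group_add \<Rightarrow> 'r) \<Rightarrow> ('r \<Rightarrow> 'r) \<Rightarrow> ('h \<Rightarrow> 'r \<Rightarrow> 'r) \<Rightarrow>
    (complex \<Rightarrow> 's::ab_group_add \<Rightarrow> 's) \<Rightarrow> ('s \<Rightarrow> 's) \<Rightarrow> ('h \<Rightarrow> 's \<Rightarrow> 's) \<Rightarrow>
    (complex \<Rightarrow> 't::ab_group_add \<Rightarrow> 't) \<Rightarrow> ('t \<Rightarrow> 't) \<Rightarrow> ('h \<Rightarrow> 't \<Rightarrow> 't) \<Rightarrow>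
    ('r \<Rightarrow> 's \<Rightarrow> 't) \<Rightarrow> bool" where
  "even_intertwiner sh Ph sr Pr rR ss Ps rS st Pt rT f \<longleftrightarrow>
     (\<forall>s. Vector_Spaces.linear sr st (\<lambda>r. f r s)) \<and>
     (\<forall>r. Vector_Spaces.linear ss st (f r)) \<and>
     (\<forall>r s. Pt (f r s) = f (Pr r) (Ps s)) \<and>
     (\<forall>a r s. rT a (f r s) =
        f (rR a r) s + f r (rS (even_part sh Ph a) s) + f (Pr r) (rS (odd_part sh Ph a) s))"

(* ---- The induced module Ind(S) = U(hhat) (x)_{U(hhat_{>=0} + C K)} S ----
   Model: T(hhat') (x) S, where hhat' = span of the modes a_m, realised as finitely supported
   functions from words (lists of letters (a,m), a_m) to S; Ind(S) is its quotient by the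
   subspace ind_N generated by: multilinearity in the letters, the commutation relations
   (K replaced by 1), and the relations w a_m (x) s = 0 (m>0), w a_0 (x) s = w (x) a s. *)

type_synonym 'h word = "('h \<times> int) list"

definition fsc :: "(complex \<Rightarrow> 'v \<Rightarrow> 'v) \<Rightarrow> complex \<Rightarrow> ('w \<Rightarrow> 'v) \<Rightarrow> 'w \<Rightarrow> 'v" where
  "fsc sc c v = (\<lambda>u. sc c (v u))"

definition tens :: "'h word \<Rightarrow> 's::zero \<Rightarrow> 'h word \<Rightarrow> 's" where
  "tens w s = (\<lambda>u. if u = w then s else 0)"

definition fin_supp :: "('w \<Rightarrow> 's::zero) \<Rightarrow> bool" where
  "fin_supp v \<longleftrightarrow> finite {u. v u \<noteq> 0}"

definition mode :: "'h \<Rightarrow> int \<Rightarrow> ('h word \<Rightarrow> 's::zero) \<Rightarrow> 'h word \<Rightarrow> 's" where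
  "mode a m v = (\<lambda>u. case u of [] \<Rightarrow> 0 | x # u' \<Rightarrow> if x = (a, m) then v u' else 0)"

definition vpar :: "('h \<Rightarrow> 'h) \<Rightarrow> ('s \<Rightarrow> 's) \<Rightarrow> ('h word \<Rightarrow> 's) \<Rightarrow> 'h word \<Rightarrow> 's" where
  "vpar Ph Ps v = (\<lambda>u. Ps (v (map (\<lambda>(a, n). (Ph a, n)) u)))"

definition ind_rels :: "(complex \<Rightarrow> 'h::ab_group_add \<Rightarrow> 'h) \<Rightarrow> ('h \<Rightarrow> 'h) \<Rightarrow> ('h \<Rightarrow> 'h \<Rightarrow> complex) \<Rightarrow>
    (complex \<Rightarrow> 's::ab_group_add \<Rightarrow> 's) \<Rightarrow> ('h \<Rightarrow> 's \<Rightarrow> 's) \<Rightarrow> ('h word \<Rightarrow> 's) set" where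
  "ind_rels sh Ph B ss rS =
     {tens (w1 @ (sh c a + b, m) # w2) s - fsc ss c (tens (w1 @ (a, m) # w2) s) - tens (w1 @ (b, m) # w2) s
       | w1 w2 c a b m s. True}
   \<union> {tens (w1 @ (a, m) # (b, n) # w2) s - tens (w1 @ (b, n) # (a, m) # w2) (ss (ksign Ph a b) s)
        - tens (w1 @ w2) (ss (of_int m * (if m + n = 0 then B a b else 0)) s)
       | w1 w2 a b m n s. homog Ph a \<and> homog Ph b}
   \<union> {tens (w @ [(a, m)]) s | w a m s. m > 0}
   \<union> {tens (w @ [(a, 0)]) s - tens w (rS a s) | w a s. True}"

definition ind_N :: "(complex \<Rightarrow> 'h::ab_group_add \<Rightarrow> 'h) \<Rightarrow> ('h \<Rightarrow> 'h) \<Rightarrow> ('h \<Rightarrow> 'h \<Rightarrow> complex) \<Rightarrow>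
    (complex \<Rightarrow> 's::ab_group_add \<Rightarrow> 's) \<Rightarrow> ('h \<Rightarrow> 's \<Rightarrow> 's) \<Rightarrow> ('h word \<Rightarrow> 's) set" where
  "ind_N sh Ph B ss rS = module.span (fsc ss) (ind_rels sh Ph B ss rS)"

(* q : R \<times> (T(hhat') (x) S) -> T(hhat') (x) T on representatives; it represents an even linear
   map Q : R (x) Ind(S) -> Ind(T) (via the universal property of (x)) satisfying (1) and (2);
   all equalities are in the quotient Ind(T), i.e. modulo ind_N for T. *)
definition is_Qf :: "(complex \<Rightarrow> 'h::ab_group_add \<Rightarrow> 'h) \<Rightarrow> ('h \<Rightarrow> 'h) \<Rightarrow> ('h \<Rightarrow> 'h \<Rightarrow> complex) \<Rightarrow>
    (complex \<Rightarrow> 'r::ab_group_add \<Rightarrow> 'r) \<Rightarrow> ('r \<Rightarrow> 'r) \<Rightarrow> ('h \<Rightarrow> 'r \<Rightarrow> 'r) \<Rightarrow>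
    (complex \<Rightarrow> 's::ab_group_add \<Rightarrow> 's) \<Rightarrow> ('s \<Rightarrow> 's) \<Rightarrow> ('h \<Rightarrow> 's \<Rightarrow> 's) \<Rightarrow>
    (complex \<Rightarrow> 't::ab_group_add \<Rightarrow> 't) \<Rightarrow> ('t \<Rightarrow> 't) \<Rightarrow> ('h \<Rightarrow> 't \<Rightarrow> 't) \<Rightarrow>
    ('r \<Rightarrow> 's \<Rightarrow> 't) \<Rightarrow> ('r \<Rightarrow> ('h word \<Rightarrow> 's) \<Rightarrow> ('h word \<Rightarrow> 't)) \<Rightarrow> bool" where
  "is_Qf sh Ph B sr Pr rR ss Ps rS st Pt rT f q \<longleftrightarrow>
    (let NS = ind_N sh Ph B ss rS; NT = ind_N sh Ph B st rT in
     (\<forall>r v. fin_supp v \<longrightarrow> fin_supp (q r v)) \<and>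
     (\<forall>r v v'. fin_supp v \<and> fin_supp v' \<and> v - v' \<in> NS \<longrightarrow> q r v - q r v' \<in> NT) \<and>
     (\<forall>c r r' v. fin_supp v \<longrightarrow> q (sr c r + r') v - (fsc st c (q r v) + q r' v) \<in> NT) \<and>
     (\<forall>c r v v'. fin_supp v \<and> fin_supp v' \<longrightarrow>
         q r (fsc ss c v + v') - (fsc st c (q r v) + q r v') \<in> NT) \<and>
     (\<forall>r v. fin_supp v \<longrightarrow> q (Pr r) (vpar Ph Ps v) - vpar Ph Pt (q r v) \<in> NT) \<and>
     (\<forall>r s. q r (tens [] s) - tens [] (f r s) \<in> NT) \<and>
     (\<forall>a m r v. fin_supp v \<longrightarrow>
         mode a m (q r v) - ((if m = 0 then q (rR a r) v else 0)
                               + q r (mode (even_part sh Ph a) m v)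
                               + q (Pr r) (mode (odd_part sh Ph a) m v)) \<in> NT))"

end

theory Submission
  imports Defs
begin

text \<open>Property (2) at a single letter says
  \<open>Q\<^sub>f(r \<otimes> a\<^sub>m v) = a\<^sub>m Q\<^sub>f(r \<otimes> v) - \<delta>\<^sub>m\<^sub>,\<^sub>0 Q\<^sub>f(a r \<otimes> v)\<close> (up to the Koszul sign),
  so by induction on the length of a word \<open>Q\<^sub>f\<close> is determined on every representative
  \<open>r \<otimes> w \<otimes> s\<close> by \<open>f\<close>; this is uniqueness. For existence the same recursion is taken as a
  definition on the tensor algebra, and one checks that it sends each defining relation of
  \<open>Ind(S)\<close> into the relations of \<open>Ind(T)\<close>: linearity in the letters and the relations
  \<open>a\<^sub>m s = 0\<close> (\<open>m > 0\<close>), \<open>a\<^sub>0 s = a s\<close> are inherited from \<open>Ind(T)\<close> and from \<open>f\<close> being an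
  intertwiner, while the commutation relation reduces to the one in \<open>Ind(T)\<close> together with the
  supercommutativity of the action on \<open>R\<close>.\<close>

section \<open>Finitely supported functions on words\<close>

lemma linear_simps:
  assumes "Vector_Spaces.linear s1 s2 g"
  shows "g (x + y) = g x + g y" "g (s1 c x) = s2 c (g x)" "g 0 = 0" "g (- x) = - g x"
    "g (x - y) = g x - g y"
  using assms[unfolded linear_iff_module_hom]
  by (simp_all add: module_hom.add module_hom.scale module_hom.zero module_hom.neg module_hom.diff)

lemma vector_space_fsc:
  assumes "vector_space sc"
  shows "vector_space (fsc sc)"
proof -
  interpret vector_space sc by fact
  show ?thesis
    by unfold_locales (auto simp: fsc_def fun_eq_iff scale_right_distrib scale_left_distrib)
qed

interpretation mode: additive "mode a m :: ('h word \<Rightarrow> 'v::ab_group_add) \<Rightarrow> _" for a m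
  by unfold_locales (auto simp: mode_def fun_eq_iff split: list.splits)

interpretation tens: additive "tens w :: 'v::ab_group_add \<Rightarrow> _" for w
  by unfold_locales (auto simp: tens_def fun_eq_iff)

lemmas mode_simps[simp] = mode.add mode.zero mode.minus mode.diff
lemmas tens_simps[simp] = tens.add tens.zero tens.minus tens.diff

lemma mode_tens: "mode a m (tens w s) = tens ((a, m) # w) (s :: 'v::ab_group_add)"
  by (auto simp: mode_def tens_def fun_eq_iff split: list.splits)

lemma mode_fsc: "sc c 0 = 0 \<Longrightarrow> mode a m (fsc sc c X) = fsc sc c (mode a m (X :: 'h word \<Rightarrow> 'v::ab_group_add))"
  by (auto simp: mode_def fsc_def fun_eq_iff split: list.splits)

lemma fsc_tens: "sc c 0 = 0 \<Longrightarrow> fsc sc c (tens w s) = tens w (sc c (s :: 'v::ab_group_add))"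
  by (auto simp: tens_def fsc_def fun_eq_iff)

lemma fin_supp_tens [simp]: "fin_supp (tens w (s :: 'v::ab_group_add))"
  unfolding fin_supp_def by (rule finite_subset[of _ "{w}"]) (auto simp: tens_def)

lemma fin_supp_zero [simp]: "fin_supp (0 :: 'w \<Rightarrow> 'v::ab_group_add)"
  by (simp add: fin_supp_def)

lemma fin_supp_add [simp]: "fin_supp X \<Longrightarrow> fin_supp Y \<Longrightarrow> fin_supp (X + (Y :: 'w \<Rightarrow> 'v::ab_group_add))"
  unfolding fin_supp_def by (rule finite_subset[of _ "{u. X u \<noteq> 0} \<union> {u. Y u \<noteq> 0}"]) auto

lemma fin_supp_minus [simp]: "fin_supp (- X) = fin_supp (X :: 'w \<Rightarrow> 'v::ab_group_add)"
  by (simp add: fin_supp_def)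

lemma fin_supp_diff [simp]: "fin_supp X \<Longrightarrow> fin_supp Y \<Longrightarrow> fin_supp (X - (Y :: 'w \<Rightarrow> 'v::ab_group_add))"
  using fin_supp_add[of X "- Y"] by simp

lemma fin_supp_sum [simp]:
  "(\<And>i. i \<in> A \<Longrightarrow> fin_supp (X i)) \<Longrightarrow> fin_supp (\<Sum>i\<in>A. X i :: 'w \<Rightarrow> 'v::ab_group_add)"
  by (induct A rule: infinite_finite_induct) auto

lemma fin_supp_fsc [simp]: "sc c 0 = 0 \<Longrightarrow> fin_supp X \<Longrightarrow> fin_supp (fsc sc c (X :: 'w \<Rightarrow> 'v::ab_group_add))"
  unfolding fin_supp_def by (erule finite_subset[rotated]) (auto simp: fsc_def)

lemma sum_fun_apply: "(\<Sum>i\<in>A. F i) x = (\<Sum>i\<in>A. F i x)"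
  by (induct A rule: infinite_finite_induct) auto

lemma fin_supp_eq_sum_tens:
  assumes "fin_supp (v :: 'h word \<Rightarrow> 'v::ab_group_add)"
  shows "v = (\<Sum>u\<in>{u. v u \<noteq> 0}. tens u (v u))"
proof
  fix x
  have "finite {u. v u \<noteq> 0}" using assms by (simp add: fin_supp_def)
  then show "v x = (\<Sum>u\<in>{u. v u \<noteq> 0}. tens u (v u)) x"
    by (simp add: sum_fun_apply tens_def sum.delta')
qed

lemma mode_eq_sum_tens:
  assumes "fin_supp (v :: 'h word \<Rightarrow> 'v::ab_group_add)"
  shows "mode a m v = (\<Sum>u\<in>{u. v u \<noteq> 0}. tens ((a, m) # u) (v u))"
  by (subst fin_supp_eq_sum_tens[OF assms]) (simp add: mode.sum mode_tens)

lemma fin_supp_mode [simp]: "fin_supp X \<Longrightarrow> fin_supp (mode a m (X :: 'h word \<Rightarrow> 'v::ab_group_add))"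
  by (simp add: mode_eq_sum_tens)

section \<open>The relations of the induced module\<close>

lemma ind_rels_linear_letter:
  "tens (w @ (sh c a + b, m) # w') s - fsc sv c (tens (w @ (a, m) # w') s) - tens (w @ (b, m) # w') s
     \<in> ind_rels sh Ph B sv rho"
  unfolding ind_rels_def by (intro UnI1 CollectI) fast

lemma ind_rels_commutator:
  "homog Ph a \<Longrightarrow> homog Ph b \<Longrightarrow>
   tens (w @ (a, m) # (b, n) # w') s - tens (w @ (b, n) # (a, m) # w') (sv (ksign Ph a b) s)
     - tens (w @ w') (sv (of_int m * (if m + n = 0 then B a b else 0)) s) \<in> ind_rels sh Ph B sv rho"
  unfolding ind_rels_def by blast

lemma ind_rels_positive_mode: "m > 0 \<Longrightarrow> tens (w @ [(a, m)]) s \<in> ind_rels sh Ph B sv rho"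
  unfolding ind_rels_def by blast

lemma ind_rels_zero_mode: "tens (w @ [(a, 0)]) s - tens w (rho a s) \<in> ind_rels sh Ph B sv rho"
  unfolding ind_rels_def by blast

lemma ind_rels_cases:
  assumes "x \<in> ind_rels sh Ph B sv rho"
  obtains
    (linear_letter) w w' c a b m s where
      "x = tens (w @ (sh c a + b, m) # w') s - fsc sv c (tens (w @ (a, m) # w') s) - tens (w @ (b, m) # w') s"
  | (commutator) w w' a b m n s where "homog Ph a" "homog Ph b"
      "x = tens (w @ (a, m) # (b, n) # w') s - tens (w @ (b, n) # (a, m) # w') (sv (ksign Ph a b) s)
        - tens (w @ w') (sv (of_int m * (if m + n = 0 then B a b else 0)) s)"
  | (positive_mode) w a m s where "m > 0" "x = tens (w @ [(a, m)]) s"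
  | (zero_mode) w a s where "x = tens (w @ [(a, 0)]) s - tens w (rho a s)"
  using assms unfolding ind_rels_def by fast

locale induced_relations =
  fixes sh :: "complex \<Rightarrow> 'h::ab_group_add \<Rightarrow> 'h" and Ph :: "'h \<Rightarrow> 'h"
    and B :: "'h \<Rightarrow> 'h \<Rightarrow> complex"
    and sv :: "complex \<Rightarrow> 'v::ab_group_add \<Rightarrow> 'v" and rho :: "'h \<Rightarrow> 'v \<Rightarrow> 'v"
  assumes vector_space_h: "vector_space sh" and vector_space: "vector_space sv"
begin

sublocale H: vector_space sh by (rule vector_space_h)
sublocale V: vector_space sv by (rule vector_space)
sublocale F: vector_space "fsc sv" by (rule vector_space_fsc[OF vector_space])

abbreviation N where "N \<equiv> ind_N sh Ph B sv rho"

lemmas N_base = F.span_base[where S = "ind_rels sh Ph B sv rho", folded ind_N_def]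
lemmas N_zero = F.span_zero[where S = "ind_rels sh Ph B sv rho", folded ind_N_def]
lemmas N_add = F.span_add[where S = "ind_rels sh Ph B sv rho", folded ind_N_def]
lemmas N_diff = F.span_diff[where S = "ind_rels sh Ph B sv rho", folded ind_N_def]
lemmas N_neg = F.span_neg[where S = "ind_rels sh Ph B sv rho", folded ind_N_def]
lemmas N_scale = F.span_scale[where S = "ind_rels sh Ph B sv rho", folded ind_N_def]
lemmas N_sum = F.span_sum[where S = "ind_rels sh Ph B sv rho", folded ind_N_def]

lemma fin_supp_scale [simp]: "fin_supp X \<Longrightarrow> fin_supp (fsc sv c X)"
  by (rule fin_supp_fsc) simp_all

lemma N_trans: "x - y \<in> N \<Longrightarrow> y - z \<in> N \<Longrightarrow> x - z \<in> N"
  using N_add[of "x - y" "y - z"] by simp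

lemma N_minus_iff: "- x \<in> N \<longleftrightarrow> x \<in> N"
  using N_neg[of x] N_neg[of "- x"] by auto

lemma fin_supp_ind_rels: "x \<in> ind_rels sh Ph B sv rho \<Longrightarrow> fin_supp x"
  by (erule ind_rels_cases) (simp_all add: fsc_tens)

text \<open>Induction rules instantiate a function-valued goal in \<eta>-expanded form, which the
  simplifier does not fold back; such cases are stated explicitly or closed by \<open>rule\<close>.\<close>

lemma fin_supp_ind_N: "x \<in> N \<Longrightarrow> fin_supp x"
  unfolding ind_N_def
proof (erule F.span_induct_alt)
  fix c x and y :: "'h word \<Rightarrow> 'v"
  assume "x \<in> ind_rels sh Ph B sv rho" "fin_supp y"
  then show "fin_supp (fsc sv c x + y)" by (simp add: fin_supp_ind_rels)
next
  show "fin_supp (0 :: 'h word \<Rightarrow> 'v)" by simp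
qed

lemma ind_rels_mode: "x \<in> ind_rels sh Ph B sv rho \<Longrightarrow> mode a k x \<in> ind_rels sh Ph B sv rho"
proof (induct rule: ind_rels_cases)
  case (linear_letter w w' c a' b m s)
  then show ?case using ind_rels_linear_letter[where w = "(a, k) # w"]
    by (simp add: mode_tens mode_fsc)
next
  case (commutator w w' a' b m n s)
  then show ?case using ind_rels_commutator[where w = "(a, k) # w"]
    by (simp only: mode.diff mode_tens append_Cons)
next
  case positive_mode
  then show ?case using ind_rels_positive_mode[where w = "(a, k) # w" for w] by (simp add: mode_tens)
next
  case zero_mode
  then show ?case using ind_rels_zero_mode[where w = "(a, k) # w" for w] by (simp add: mode_tens)
qed

lemma ind_N_mode: "x \<in> N \<Longrightarrow> mode a k x \<in> N"
  unfolding ind_N_def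
proof (erule F.span_induct_alt)
  fix c x y
  assume "x \<in> ind_rels sh Ph B sv rho" "mode a k y \<in> F.span (ind_rels sh Ph B sv rho)"
  then show "mode a k (fsc sv c x + y) \<in> F.span (ind_rels sh Ph B sv rho)"
    by (simp add: mode_fsc F.span_add F.span_scale F.span_base ind_rels_mode)
next
  show "mode a k 0 \<in> F.span (ind_rels sh Ph B sv rho)" by (simp add: F.span_zero)
qed

lemma ind_N_from_tens:
  fixes G :: "('h word \<Rightarrow> 'v) \<Rightarrow> 'h word \<Rightarrow> 'v"
  assumes add: "\<And>X Y. G (X + Y) = G X + G Y" and tens: "\<And>u s. G (tens u s) \<in> N"
    and "fin_supp X"
  shows "G X \<in> N"
proof -
  interpret G: additive G by unfold_locales (rule add)
  have "G X = (\<Sum>u\<in>{u. X u \<noteq> 0}. G (tens u (X u)))"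
    by (subst fin_supp_eq_sum_tens[OF \<open>fin_supp X\<close>]) (rule G.sum)
  also have "\<dots> \<in> N" by (intro N_sum tens)
  finally show ?thesis .
qed

lemma mode_linear_letter:
  assumes "fin_supp X"
  shows "mode (sh c a + b) m X - fsc sv c (mode a m X) - mode b m X \<in> N"
proof -
  define G where "G X = mode (sh c a + b) m X - fsc sv c (mode a m X) - mode b m X" for X
  have "G X \<in> N"
  proof (rule ind_N_from_tens[OF _ _ assms])
    show "G (X + Y) = G X + G Y" for X Y by (simp add: G_def F.scale_right_distrib)
    show "G (tens u s) \<in> N" for u s
      using N_base[OF ind_rels_linear_letter[where w = "[]"]] by (simp add: G_def mode_tens)
  qed
  then show ?thesis by (simp add: G_def)
qed

lemma mode_add_letter: "fin_supp X \<Longrightarrow> mode (a + b) m X - (mode a m X + mode b m X) \<in> N"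
  using mode_linear_letter[of X 1 a b m] by (simp add: algebra_simps)

lemma mode_zero_letter: "fin_supp X \<Longrightarrow> mode 0 m X \<in> N"
  using mode_linear_letter[of X 1 0 0 m] by (simp add: N_minus_iff)

lemma mode_commutator:
  assumes "fin_supp X" and "homog Ph a" "homog Ph b"
  shows "mode a m (mode b n X) - fsc sv (ksign Ph a b) (mode b n (mode a m X))
     - fsc sv (of_int m * (if m + n = 0 then B a b else 0)) X \<in> N"
proof -
  define G where "G X = mode a m (mode b n X) - fsc sv (ksign Ph a b) (mode b n (mode a m X))
     - fsc sv (of_int m * (if m + n = 0 then B a b else 0)) X" for X
  have "G X \<in> N"
  proof (rule ind_N_from_tens[OF _ _ assms(1)])
    show "G (X + Y) = G X + G Y" for X Y by (simp add: G_def F.scale_right_distrib)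
    show "G (tens u s) \<in> N" for u s
      using N_base[OF ind_rels_commutator[OF assms(2,3), where w = "[]"]]
      by (simp add: G_def mode_tens fsc_tens)
  qed
  then show ?thesis by (simp add: G_def)
qed

lemma tens_positive_mode: "m > 0 \<Longrightarrow> tens [(a, m)] s \<in> N"
  using ind_rels_positive_mode[where w = "[]"] by (intro N_base) simp

lemma tens_zero_mode: "tens [(a, 0)] s - tens [] (rho a s) \<in> N"
  using ind_rels_zero_mode[where w = "[]"] by (intro N_base) simp

end

section \<open>Even and odd parts\<close>

locale super_space =
  fixes sc :: "complex \<Rightarrow> 'v::ab_group_add \<Rightarrow> 'v" and P :: "'v \<Rightarrow> 'v"
  assumes super_vs: "super_vs sc P"
begin

sublocale vector_space sc using super_vs by (simp add: super_vs_def)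

lemma linear_P: "Vector_Spaces.linear sc sc P"
  using super_vs by (simp add: super_vs_def)

lemma P_P [simp]: "P (P x) = x"
  using super_vs by (simp add: super_vs_def)

lemmas P_simps [simp] = linear_simps[OF linear_P]

lemma half_double: "sc (1/2) (x + x) = x"
proof -
  have "x + x = sc 2 x" using scale_left_distrib[of 1 1 x] by simp
  then show ?thesis by simp
qed

lemma even_part_add_odd_part: "even_part sc P x + odd_part sc P x = x"
proof -
  have "even_part sc P x + odd_part sc P x = sc (1/2) ((x + P x) + (x - P x))"
    unfolding even_part_def odd_part_def scale_right_distrib[symmetric] ..
  also have "(x + P x) + (x - P x) = x + x" by simp
  finally show ?thesis by (simp add: half_double)
qed

lemma P_even_part [simp]: "P (even_part sc P x) = even_part sc P x"
  by (simp add: even_part_def add.commute)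

lemma P_odd_part [simp]: "P (odd_part sc P x) = - odd_part sc P x"
  by (simp add: odd_part_def scale_right_diff_distrib)

lemma parts_of_even: "P x = x \<Longrightarrow> even_part sc P x = x \<and> odd_part sc P x = 0"
  by (simp add: even_part_def odd_part_def half_double)

lemma parts_of_odd: "P x = - x \<Longrightarrow> even_part sc P x = 0 \<and> odd_part sc P x = x"
  by (simp add: even_part_def odd_part_def half_double)

lemma parts_of_parts [simp]:
  "even_part sc P (even_part sc P x) = even_part sc P x" "odd_part sc P (even_part sc P x) = 0"
  "even_part sc P (odd_part sc P x) = 0" "odd_part sc P (odd_part sc P x) = odd_part sc P x"
  using parts_of_even[OF P_even_part] parts_of_odd[OF P_odd_part] by auto

lemma parts_of_P [simp]:
  "even_part sc P (P x) = even_part sc P x" "odd_part sc P (P x) = - odd_part sc P x"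
  by (simp_all add: even_part_def odd_part_def add.commute scale_right_diff_distrib)

lemma parts_linear [simp]:
  "even_part sc P (x + y) = even_part sc P x + even_part sc P y"
  "even_part sc P (sc c x) = sc c (even_part sc P x)"
  "even_part sc P 0 = 0" "even_part sc P (- x) = - even_part sc P x"
  "odd_part sc P (x + y) = odd_part sc P x + odd_part sc P y"
  "odd_part sc P (sc c x) = sc c (odd_part sc P x)"
  "odd_part sc P 0 = 0" "odd_part sc P (- x) = - odd_part sc P x"
  by (simp_all add: even_part_def odd_part_def scale_right_distrib scale_right_diff_distrib
      scale_left_commute algebra_simps)

end

section \<open>The map on representatives\<close>

locale tensor_intertwiner =
  fixes sh :: "complex \<Rightarrow> 'h::ab_group_add \<Rightarrow> 'h" and Ph :: "'h \<Rightarrow> 'h"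
    and B :: "'h \<Rightarrow> 'h \<Rightarrow> complex"
    and sr :: "complex \<Rightarrow> 'r::ab_group_add \<Rightarrow> 'r" and Pr :: "'r \<Rightarrow> 'r" and rR :: "'h \<Rightarrow> 'r \<Rightarrow> 'r"
    and ss :: "complex \<Rightarrow> 's::ab_group_add \<Rightarrow> 's" and Ps :: "'s \<Rightarrow> 's" and rS :: "'h \<Rightarrow> 's \<Rightarrow> 's"
    and st :: "complex \<Rightarrow> 't::ab_group_add \<Rightarrow> 't" and Pt :: "'t \<Rightarrow> 't" and rT :: "'h \<Rightarrow> 't \<Rightarrow> 't"
    and f :: "'r \<Rightarrow> 's \<Rightarrow> 't"
  assumes heis: "heis_data sh Ph B"
    and module_R: "h_module sh Ph sr Pr rR"
    and module_S: "h_module sh Ph ss Ps rS"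
    and module_T: "h_module sh Ph st Pt rT"
    and intertwiner: "even_intertwiner sh Ph sr Pr rR ss Ps rS st Pt rT f"
begin

sublocale H: super_space sh Ph
  using heis by unfold_locales (simp add: heis_data_def)
sublocale R: super_space sr Pr
  using module_R by unfold_locales (simp add: h_module_def)
sublocale S: super_space ss Ps
  using module_S by unfold_locales (simp add: h_module_def)
sublocale T: super_space st Pt
  using module_T by unfold_locales (simp add: h_module_def)
sublocale IndS: induced_relations sh Ph B ss rS ..
sublocale IndT: induced_relations sh Ph B st rT ..

abbreviation NS where "NS \<equiv> ind_N sh Ph B ss rS"
abbreviation NT where "NT \<equiv> ind_N sh Ph B st rT"
abbreviation ea where "ea \<equiv> even_part sh Ph"
abbreviation oa where "oa \<equiv> odd_part sh Ph"

lemma rR_linear: "Vector_Spaces.linear sr sr (rR a)"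
  using module_R unfolding h_module_def by blast
lemma rR_linear_letter: "Vector_Spaces.linear sh sr (\<lambda>a. rR a r)"
  using module_R unfolding h_module_def by blast
lemma rS_linear_letter: "Vector_Spaces.linear sh ss (\<lambda>a. rS a s)"
  using module_S unfolding h_module_def by blast
lemma rT_linear: "Vector_Spaces.linear st st (rT a)"
  using module_T unfolding h_module_def by blast
lemma Pr_rR: "Pr (rR a r) = rR (Ph a) (Pr r)"
  using module_R unfolding h_module_def by blast
lemma rR_supercommute: "homog Ph a \<Longrightarrow> homog Ph b \<Longrightarrow> rR a (rR b r) = sr (ksign Ph a b) (rR b (rR a r))"
  using module_R unfolding h_module_def by blast

lemma f_linear_left: "Vector_Spaces.linear sr st (\<lambda>r. f r s)"
  using intertwiner unfolding even_intertwiner_def by blast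
lemma f_linear_right: "Vector_Spaces.linear ss st (f r)"
  using intertwiner unfolding even_intertwiner_def by blast
lemma Pt_f: "Pt (f r s) = f (Pr r) (Ps s)"
  using intertwiner unfolding even_intertwiner_def by blast
lemma rT_f: "rT a (f r s) = f (rR a r) s + f r (rS (ea a) s) + f (Pr r) (rS (oa a) s)"
  using intertwiner unfolding even_intertwiner_def by blast

lemmas rR_simps [simp] = linear_simps[OF rR_linear] linear_simps[OF rR_linear_letter]
lemmas rS_simps [simp] = linear_simps[OF rS_linear_letter]
lemmas rT_simps [simp] = linear_simps[OF rT_linear]
lemmas f_simps [simp] = linear_simps[OF f_linear_left] linear_simps[OF f_linear_right]

lemma rR_split: "rR a r = rR (ea a) r + rR (oa a) r"
  using linear_simps(1)[OF rR_linear_letter, of "ea a" "oa a"] by (simp add: H.even_part_add_odd_part)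

lemma rS_split: "rS a s = rS (ea a) s + rS (oa a) s"
  using linear_simps(1)[OF rS_linear_letter, of "ea a" "oa a"] by (simp add: H.even_part_add_odd_part)

text \<open>The recursion forced by property (2); the Koszul sign of an odd letter is carried by
  applying \<open>Pr\<close> to \<open>r\<close>.\<close>

definition Q_step :: "'h \<Rightarrow> int \<Rightarrow> ('r \<Rightarrow> 'h word \<Rightarrow> 't) \<Rightarrow> 'r \<Rightarrow> 'h word \<Rightarrow> 't" where
  "Q_step a m F r =
     mode (ea a) m (F r) - (if m = 0 then F (rR (ea a) r) else 0)
     + mode (oa a) m (F (Pr r)) - (if m = 0 then F (rR (oa a) (Pr r)) else 0)"

lemma Q_step_add: "Q_step a m (\<lambda>r. F r + G r) r = Q_step a m F r + Q_step a m G r"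
  by (simp add: Q_step_def algebra_simps)

lemma Q_step_diff: "Q_step a m (\<lambda>r. F r - G r) r = Q_step a m F r - Q_step a m G r"
  by (simp add: Q_step_def algebra_simps)

lemma Q_step_scale: "Q_step a m (\<lambda>r. fsc st c (F r)) r = fsc st c (Q_step a m F r)"
  by (simp add: Q_step_def mode_fsc IndT.F.scale_right_distrib IndT.F.scale_right_diff_distrib)

lemma Q_step_ind_N: "(\<And>r. F r \<in> NT) \<Longrightarrow> Q_step a m F r \<in> NT"
  by (simp add: Q_step_def IndT.N_add IndT.N_diff IndT.ind_N_mode IndT.N_zero)

lemma Q_step_cong: "(\<And>r. F r - G r \<in> NT) \<Longrightarrow> Q_step a m F r - Q_step a m G r \<in> NT"
  using Q_step_ind_N[of "\<lambda>r. F r - G r"] by (simp add: Q_step_diff)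

lemma fin_supp_Q_step: "(\<And>r. fin_supp (F r)) \<Longrightarrow> fin_supp (Q_step a m F r)"
  by (simp add: Q_step_def)

lemma linear_Q_step:
  assumes "Vector_Spaces.linear sr (fsc st) F"
  shows "Vector_Spaces.linear sr (fsc st) (Q_step a m F)"
  by unfold_locales
    (simp_all add: Q_step_def linear_simps[OF assms] mode_fsc algebra_simps
      IndT.F.scale_right_distrib IndT.F.scale_right_diff_distrib)

lemma ind_N_prefix_induct:
  assumes "\<And>a m w r. D r ((a, m) # w) = Q_step a m (\<lambda>r. D r w) r" and "\<And>r. D r [] \<in> NT"
  shows "D r w \<in> NT"
proof (induct w arbitrary: r)
  case Nil
  show ?case by (rule assms(2))
next
  case (Cons x w)
  then show ?case by (cases x) (simp add: assms(1) Q_step_ind_N)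
qed

primrec Q_word :: "'h word \<Rightarrow> 'r \<Rightarrow> 's \<Rightarrow> 'h word \<Rightarrow> 't" where
  "Q_word [] r s = tens [] (f r s)"
| "Q_word (x # w) r s = Q_step (fst x) (snd x) (\<lambda>r'. Q_word w r' s) r"

lemma linear_Q_word_left: "Vector_Spaces.linear sr (fsc st) (\<lambda>r. Q_word w r s)"
proof (induct w)
  case Nil
  show ?case by unfold_locales (simp_all add: fsc_tens fun_eq_iff)
next
  case (Cons x w)
  then show ?case by (simp add: linear_Q_step)
qed

lemma Q_word_add_right: "Q_word w r (s + s') = Q_word w r s + Q_word w r s'"
  by (induct w arbitrary: r) (simp_all add: Q_step_add)

lemma Q_word_scale_right: "Q_word w r (ss c s) = fsc st c (Q_word w r s)"
  by (induct w arbitrary: r) (simp_all add: fsc_tens Q_step_scale)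

lemma linear_Q_word_right: "Vector_Spaces.linear ss (fsc st) (Q_word w r)"
  by unfold_locales (rule Q_word_add_right Q_word_scale_right)+

lemmas Q_word_simps [simp] = linear_simps[OF linear_Q_word_left] linear_simps[OF linear_Q_word_right]

lemma fin_supp_Q_word [simp]: "fin_supp (Q_word w r s)"
  by (induct w arbitrary: r) (simp_all add: fin_supp_Q_step)

definition Q_rep :: "'r \<Rightarrow> ('h word \<Rightarrow> 's) \<Rightarrow> 'h word \<Rightarrow> 't" where
  "Q_rep r v = (\<Sum>u\<in>{u. v u \<noteq> 0}. Q_word u r (v u))"

lemma Q_rep_eq_sum:
  "finite A \<Longrightarrow> {u. v u \<noteq> 0} \<subseteq> A \<Longrightarrow> Q_rep r v = (\<Sum>u\<in>A. Q_word u r (v u))"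
  unfolding Q_rep_def by (rule sum.mono_neutral_left) auto

lemma Q_rep_add:
  assumes "fin_supp v" "fin_supp v'"
  shows "Q_rep r (v + v') = Q_rep r v + Q_rep r v'"
proof -
  let ?A = "{u. v u \<noteq> 0} \<union> {u. v' u \<noteq> 0}"
  have "finite ?A" using assms by (simp add: fin_supp_def)
  then show ?thesis
    by (subst (1 2 3) Q_rep_eq_sum[of ?A]) (auto simp: sum.distrib)
qed

lemma Q_rep_scale:
  assumes "fin_supp v"
  shows "Q_rep r (fsc ss c v) = fsc st c (Q_rep r v)"
proof -
  have "Q_rep r (fsc ss c v) = (\<Sum>u\<in>{u. v u \<noteq> 0}. Q_word u r (ss c (v u)))"
    using assms by (subst Q_rep_eq_sum[of "{u. v u \<noteq> 0}"]) (auto simp: fin_supp_def fsc_def)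
  also have "\<dots> = fsc st c (Q_rep r v)"
    by (simp add: Q_rep_def IndT.F.scale_sum_right)
  finally show ?thesis .
qed

lemma Q_rep_zero [simp]: "Q_rep r 0 = 0"
  by (simp add: Q_rep_def)

lemma Q_rep_diff:
  assumes "fin_supp v" "fin_supp v'"
  shows "Q_rep r (v - v') = Q_rep r v - Q_rep r v'"
  using Q_rep_add[of "v - v'" v'] assms by simp

lemma Q_rep_tens [simp]: "Q_rep r (tens w s) = Q_word w r s"
  by (subst Q_rep_eq_sum[of "{w}"]) (auto simp: tens_def)

lemma Q_rep_sum:
  "(\<And>i. i \<in> I \<Longrightarrow> fin_supp (X i)) \<Longrightarrow> Q_rep r (sum X I) = (\<Sum>i\<in>I. Q_rep r (X i))"
  by (induct I rule: infinite_finite_induct) (simp_all add: Q_rep_add)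

lemma fin_supp_Q_rep [simp]: "fin_supp (Q_rep r v)"
  by (simp add: Q_rep_def)

lemma Q_rep_linear_left: "Q_rep (r + r') v = Q_rep r v + Q_rep r' v" "Q_rep (sr c r) v = fsc st c (Q_rep r v)"
  by (simp_all add: Q_rep_def sum.distrib IndT.F.scale_sum_right)

subsection \<open>Compatibility with the defining relations of \<open>Ind(S)\<close>\<close>

lemma Q_word_linear_letter:
  "Q_word (w @ (sh c a + b, m) # w') r s - fsc st c (Q_word (w @ (a, m) # w') r s)
     - Q_word (w @ (b, m) # w') r s \<in> NT"
proof -
  define D where "D r w = Q_word (w @ (sh c a + b, m) # w') r s - fsc st c (Q_word (w @ (a, m) # w') r s)
     - Q_word (w @ (b, m) # w') r s" for r w
  have "D r w \<in> NT"
  proof (rule ind_N_prefix_induct)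
    show "D r ((a', m') # w) = Q_step a' m' (\<lambda>r. D r w) r" for a' m' w r
      by (simp add: D_def Q_step_diff Q_step_scale)
    fix r
    let ?F = "\<lambda>r. Q_word w' r s"
    have "D r [] = (mode (sh c (ea a) + ea b) m (?F r) - fsc st c (mode (ea a) m (?F r)) - mode (ea b) m (?F r))
      + (mode (sh c (oa a) + oa b) m (?F (Pr r)) - fsc st c (mode (oa a) m (?F (Pr r)))
         - mode (oa b) m (?F (Pr r)))"
      by (cases "m = 0") (simp_all add: D_def Q_step_def algebra_simps)
    then show "D r [] \<in> NT"
      by (simp add: IndT.N_add IndT.mode_linear_letter)
  qed
  then show ?thesis by (simp add: D_def)
qed

lemma Q_word_positive_mode:
  assumes "m > 0"
  shows "Q_word (w @ [(a, m)]) r s \<in> NT"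
proof -
  define D where "D r w = Q_word (w @ [(a, m)]) r s" for r w
  have "D r w \<in> NT"
  proof (rule ind_N_prefix_induct)
    show "D r ((a', m') # w) = Q_step a' m' (\<lambda>r. D r w) r" for a' m' w r
      by (simp add: D_def)
    show "D r [] \<in> NT" for r
      using assms by (simp add: D_def Q_step_def mode_tens IndT.tens_positive_mode IndT.N_add)
  qed
  then show ?thesis by (simp add: D_def)
qed

lemma Q_word_zero_mode: "Q_word (w @ [(a, 0)]) r s - Q_word w r (rS a s) \<in> NT"
proof -
  define D where "D r w = Q_word (w @ [(a, 0)]) r s - Q_word w r (rS a s)" for r w
  have "D r w \<in> NT"
  proof (rule ind_N_prefix_induct)
    show "D r ((a', m') # w) = Q_step a' m' (\<lambda>r. D r w) r" for a' m' w r
      by (simp add: D_def Q_step_diff)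
    fix r
    have "D r [] = (tens [(ea a, 0)] (f r s) - tens [] (rT (ea a) (f r s)))
      + (tens [(oa a, 0)] (f (Pr r) s) - tens [] (rT (oa a) (f (Pr r) s)))"
      unfolding D_def by (subst rS_split) (simp add: Q_step_def mode_tens rT_f algebra_simps)
    then show "D r [] \<in> NT"
      by (simp add: IndT.N_add IndT.tens_zero_mode)
  qed
  then show ?thesis by (simp add: D_def)
qed

definition Q_step_homog :: "'h \<Rightarrow> int \<Rightarrow> ('r \<Rightarrow> 'h word \<Rightarrow> 't) \<Rightarrow> 'r \<Rightarrow> 'h word \<Rightarrow> 't" where
  "Q_step_homog a m F r =
     (if Ph a = - a then mode a m (F (Pr r)) - (if m = 0 then F (rR a (Pr r)) else 0)
      else mode a m (F r) - (if m = 0 then F (rR a r) else 0))"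

lemma Q_step_homog_equiv:
  assumes "homog Ph a" and F: "Vector_Spaces.linear sr (fsc st) F" and "\<And>r. fin_supp (F r)"
  shows "Q_step a m F r - Q_step_homog a m F r \<in> NT"
proof (cases "Ph a = - a")
  case True
  then have "Q_step a m F r - Q_step_homog a m F r = mode 0 m (F r)"
    by (simp add: Q_step_def Q_step_homog_def H.parts_of_odd linear_simps[OF F])
  then show ?thesis using assms(3) by (simp add: IndT.mode_zero_letter)
next
  case False
  then have "Ph a = a" using assms(1) by (simp add: homog_def)
  with False have "Q_step a m F r - Q_step_homog a m F r = mode 0 m (F (Pr r))"
    by (simp add: Q_step_def Q_step_homog_def H.parts_of_even linear_simps[OF F])
  then show ?thesis using assms(3) by (simp add: IndT.mode_zero_letter)
qed

lemma Q_step_homog_cong: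
  assumes "\<And>r. F r - G r \<in> NT"
  shows "Q_step_homog a m F r - Q_step_homog a m G r \<in> NT"
proof -
  define r' where "r' = (if Ph a = - a then Pr r else r)"
  have "Q_step_homog a m F r - Q_step_homog a m G r
      = mode a m (F r' - G r') - (if m = 0 then F (rR a r') - G (rR a r') else 0)"
    by (simp add: Q_step_homog_def r'_def)
  then show ?thesis
    using IndT.ind_N_mode[OF assms] by (simp add: IndT.N_diff IndT.N_zero assms del: mode_simps)
qed

lemma B_mixed_parity: "Ph a = a \<Longrightarrow> Ph b = - b \<Longrightarrow> B a b = 0 \<and> B b a = 0"
  using heis unfolding heis_data_def by blast

text \<open>The \<open>\<delta>\<close>-terms cancel by the supercommutativity of the action on \<open>R\<close>.\<close>

lemma Q_step_homog_commutator:
  assumes ha: "homog Ph a" and hb: "homog Ph b"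
    and F: "Vector_Spaces.linear sr (fsc st) F" and fin: "\<And>r. fin_supp (F r)"
  shows "Q_step_homog a m (Q_step_homog b n F) r - fsc st (ksign Ph a b) (Q_step_homog b n (Q_step_homog a m F) r)
     - fsc st (of_int m * (if m + n = 0 then B a b else 0)) (F r) \<in> NT"
proof -
  define k where "k = ksign Ph a b"
  define K where "K = (of_int m * (if m + n = 0 then B a b else 0) :: complex)"
  have comm: "rR a (rR b x) = sr k (rR b (rR a x))" for x
    using rR_supercommute[OF ha hb] by (simp add: k_def)
  have parity: "Ph a = a \<or> Ph a = - a" "Ph b = b \<or> Ph b = - b"
    using ha hb by (simp_all add: homog_def)
  have "\<exists>Y \<in> {F r, F (Pr r)}. Q_step_homog a m (Q_step_homog b n F) r - fsc st k (Q_step_homog b n (Q_step_homog a m F) r)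
     - fsc st K (F r) = mode a m (mode b n Y) - fsc st k (mode b n (mode a m Y)) - fsc st K Y"
    using comm parity B_mixed_parity[of a b] B_mixed_parity[of b a]
    by (cases "Ph a = - a"; cases "Ph b = - b"; cases "m = 0"; cases "n = 0")
      (simp_all add: k_def K_def ksign_def Q_step_homog_def linear_simps[OF F] Pr_rR algebra_simps)
  then show ?thesis
    using IndT.mode_commutator[OF _ ha hb, of _ m n] fin by (auto simp: k_def K_def)
qed

lemma Q_word_commutator_head:
  assumes ha: "homog Ph a" and hb: "homog Ph b"
  shows "Q_word ((a, m) # (b, n) # w) r s - Q_word ((b, n) # (a, m) # w) r (ss (ksign Ph a b) s)
      - Q_word w r (ss (of_int m * (if m + n = 0 then B a b else 0)) s) \<in> NT"
proof -
  define F where "F = (\<lambda>r. Q_word w r s)"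
  define k where "k = ksign Ph a b"
  define K where "K = (of_int m * (if m + n = 0 then B a b else 0) :: complex)"
  have F: "Vector_Spaces.linear sr (fsc st) F" and fin: "\<And>r. fin_supp (F r)"
    unfolding F_def by (rule linear_Q_word_left, simp)
  have lin: "Vector_Spaces.linear sr (fsc st) (Q_step c p F)" for c p
    by (rule linear_Q_step[OF F])
  have step_homog: "Q_step c p (Q_step c' p' F) r - Q_step_homog c p (Q_step_homog c' p' F) r \<in> NT"
    if "homog Ph c" "homog Ph c'" for c c' p p'
  proof -
    have "Q_step c p (Q_step c' p' F) r - Q_step_homog c p (Q_step c' p' F) r \<in> NT"
      using that(1) lin fin by (intro Q_step_homog_equiv) (simp_all add: fin_supp_Q_step)
    moreover have "Q_step_homog c p (Q_step c' p' F) r - Q_step_homog c p (Q_step_homog c' p' F) r \<in> NT"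
      using that(2) F fin by (intro Q_step_homog_cong Q_step_homog_equiv)
    ultimately show ?thesis by (rule IndT.N_trans)
  qed
  have "Q_word ((a, m) # (b, n) # w) r s - Q_word ((b, n) # (a, m) # w) r (ss k s) - Q_word w r (ss K s)
     = (Q_step a m (Q_step b n F) r - Q_step_homog a m (Q_step_homog b n F) r)
       - fsc st k (Q_step b n (Q_step a m F) r - Q_step_homog b n (Q_step_homog a m F) r)
       + (Q_step_homog a m (Q_step_homog b n F) r - fsc st k (Q_step_homog b n (Q_step_homog a m F) r)
          - fsc st K (F r))"
    by (simp add: F_def Q_step_scale algebra_simps IndT.F.scale_right_diff_distrib)
  also have "\<dots> \<in> NT"
    using IndT.N_add[OF IndT.N_diff[OF step_homog[OF ha hb, of m n] IndT.N_scale[OF step_homog[OF hb ha, of n m]]]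
        Q_step_homog_commutator[OF ha hb F fin, of m n r]]
    unfolding k_def K_def .
  finally show ?thesis by (simp add: k_def K_def)
qed

lemma Q_word_commutator:
  assumes "homog Ph a" "homog Ph b"
  shows "Q_word (w @ (a, m) # (b, n) # w') r s - Q_word (w @ (b, n) # (a, m) # w') r (ss (ksign Ph a b) s)
      - Q_word (w @ w') r (ss (of_int m * (if m + n = 0 then B a b else 0)) s) \<in> NT"
proof -
  define D where "D r w = Q_word (w @ (a, m) # (b, n) # w') r s
      - Q_word (w @ (b, n) # (a, m) # w') r (ss (ksign Ph a b) s)
      - Q_word (w @ w') r (ss (of_int m * (if m + n = 0 then B a b else 0)) s)" for r w
  have "D r w \<in> NT"
  proof (rule ind_N_prefix_induct)
    show "D r ((a', m') # w) = Q_step a' m' (\<lambda>r. D r w) r" for a' m' w r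
      by (simp add: D_def Q_step_diff Q_step_scale)
    show "D r [] \<in> NT" for r
      using Q_word_commutator_head[OF assms] by (simp add: D_def)
  qed
  then show ?thesis by (simp add: D_def)
qed

lemma Q_rep_ind_rels: "x \<in> ind_rels sh Ph B ss rS \<Longrightarrow> Q_rep r x \<in> NT"
proof (induct rule: ind_rels_cases)
  case linear_letter
  then show ?case by (simp add: Q_rep_diff Q_rep_scale Q_word_linear_letter)
next
  case (commutator w w' a b m n s)
  then show ?case using Q_word_commutator by (simp add: Q_rep_diff)
next
  case positive_mode
  then show ?case by (simp add: Q_word_positive_mode)
next
  case zero_mode
  then show ?case by (simp add: Q_rep_diff Q_word_zero_mode)
qed

lemma Q_rep_ind_N:
  assumes "v \<in> NS"
  shows "Q_rep r v \<in> NT"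
proof -
  have "v \<in> IndS.F.span (ind_rels sh Ph B ss rS)" using assms by (simp add: ind_N_def)
  then have "fin_supp v \<and> Q_rep r v \<in> NT"
  proof (rule IndS.F.span_induct_alt)
    fix c x and y :: "'h word \<Rightarrow> 's"
    assume x: "x \<in> ind_rels sh Ph B ss rS" and y: "fin_supp y \<and> Q_rep r y \<in> NT"
    have "fin_supp x" using x by (rule IndS.fin_supp_ind_rels)
    with x y show "fin_supp (fsc ss c x + y) \<and> Q_rep r (fsc ss c x + y) \<in> NT"
      by (simp add: Q_rep_add Q_rep_scale Q_rep_ind_rels IndT.N_add IndT.N_scale)
  next
    show "fin_supp (0 :: 'h word \<Rightarrow> 's) \<and> Q_rep r 0 \<in> NT" by (simp add: IndT.N_zero)
  qed
  then show ?thesis ..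
qed

definition par_word :: "('h \<Rightarrow> 'h) \<Rightarrow> 'h word \<Rightarrow> 'h word" where
  "par_word P w = map (\<lambda>(a, n). (P a, n)) w"

lemma par_word_simps [simp]:
  "par_word P [] = []" "par_word P ((a, m) # w) = (P a, m) # par_word P w"
  by (simp_all add: par_word_def)

lemma vpar_apply: "vpar Ph P X u = P (X (par_word Ph u))"
  by (simp add: vpar_def par_word_def)

lemma par_word_eq_iff: "par_word Ph u = w \<longleftrightarrow> u = par_word Ph w"
proof -
  have "par_word Ph (par_word Ph w) = w" for w by (induct w) auto
  then show ?thesis by auto
qed

lemma vpar_tens:
  "vpar Ph Ps (tens w s) = tens (par_word Ph w) (Ps s)" "vpar Ph Pt (tens w t) = tens (par_word Ph w) (Pt t)"
  by (auto simp: fun_eq_iff vpar_apply tens_def par_word_eq_iff)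

interpretation vpar_S: additive "vpar Ph Ps"
  by unfold_locales (simp add: fun_eq_iff vpar_apply)

interpretation vpar_T: additive "vpar Ph Pt"
  by unfold_locales (simp add: fun_eq_iff vpar_apply)

lemma vpar_mode: "vpar Ph Pt (mode a m X) = mode (Ph a) m (vpar Ph Pt X)"
proof
  fix u
  show "vpar Ph Pt (mode a m X) u = mode (Ph a) m (vpar Ph Pt X) u"
  proof (cases u)
    case (Cons x u')
    moreover obtain b k where "x = (b, k)" by (cases x)
    moreover have "Ph b = a \<longleftrightarrow> b = Ph a" by auto
    ultimately show ?thesis by (auto simp: vpar_apply mode_def)
  qed (simp add: vpar_apply mode_def)
qed

lemma vpar_Q_step:
  "vpar Ph Pt (Q_step a m F r) = Q_step (Ph a) m (\<lambda>r. vpar Ph Pt (F (Pr r))) (Pr r)"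
  by (simp add: Q_step_def vpar_T.add vpar_T.diff vpar_T.zero vpar_mode Pr_rR)

lemma vpar_Q_word: "vpar Ph Pt (Q_word w r s) = Q_word (par_word Ph w) (Pr r) (Ps s)"
proof (induct w arbitrary: r)
  case Nil
  show ?case by (simp add: vpar_tens Pt_f)
next
  case (Cons x w)
  then show ?case by (cases x) (simp add: vpar_Q_step)
qed

lemma Q_rep_vpar:
  assumes "fin_supp v"
  shows "Q_rep (Pr r) (vpar Ph Ps v) = vpar Ph Pt (Q_rep r v)"
proof -
  have "vpar Ph Ps v = (\<Sum>u\<in>{u. v u \<noteq> 0}. tens (par_word Ph u) (Ps (v u)))"
    by (subst fin_supp_eq_sum_tens[OF assms]) (simp add: vpar_S.sum vpar_tens)
  then have "Q_rep (Pr r) (vpar Ph Ps v) = (\<Sum>u\<in>{u. v u \<noteq> 0}. Q_word (par_word Ph u) (Pr r) (Ps (v u)))"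
    by (simp add: Q_rep_sum)
  also have "\<dots> = vpar Ph Pt (Q_rep r v)"
    by (simp add: Q_rep_def vpar_T.sum vpar_Q_word)
  finally show ?thesis .
qed

lemma mode_Q_word:
  "mode a m (Q_word w r s) - ((if m = 0 then Q_word w (rR a r) s else 0) + Q_word ((ea a, m) # w) r s
      + Q_word ((oa a, m) # w) (Pr r) s) \<in> NT"
proof -
  let ?F = "\<lambda>r. Q_word w r s"
  have "mode a m (Q_word w r s) - ((if m = 0 then Q_word w (rR a r) s else 0) + Q_word ((ea a, m) # w) r s
      + Q_word ((oa a, m) # w) (Pr r) s)
     = (mode a m (?F r) - (mode (ea a) m (?F r) + mode (oa a) m (?F r)))
       - mode 0 m (?F (Pr r)) - mode 0 m (?F (Pr r))"
    by (cases "m = 0") (simp_all add: Q_step_def rR_split[of a r] algebra_simps)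
  also have "\<dots> \<in> NT"
    by (intro IndT.N_diff IndT.mode_add_letter[where a = "ea a" and b = "oa a", simplified H.even_part_add_odd_part]
        IndT.mode_zero_letter) simp_all
  finally show ?thesis .
qed

lemma Q_rep_mode_letter:
  "fin_supp v \<Longrightarrow> Q_rep r (mode a m v) = (\<Sum>u\<in>{u. v u \<noteq> 0}. Q_word ((a, m) # u) r (v u))"
  by (simp add: mode_eq_sum_tens Q_rep_sum)

lemma Q_rep_mode:
  assumes "fin_supp v"
  shows "mode a m (Q_rep r v) - ((if m = 0 then Q_rep (rR a r) v else 0) + Q_rep r (mode (ea a) m v)
      + Q_rep (Pr r) (mode (oa a) m v)) \<in> NT"
proof -
  have "mode a m (Q_rep r v) - ((if m = 0 then Q_rep (rR a r) v else 0) + Q_rep r (mode (ea a) m v)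
      + Q_rep (Pr r) (mode (oa a) m v))
    = (\<Sum>u\<in>{u. v u \<noteq> 0}. mode a m (Q_word u r (v u)) - ((if m = 0 then Q_word u (rR a r) (v u) else 0)
        + Q_word ((ea a, m) # u) r (v u) + Q_word ((oa a, m) # u) (Pr r) (v u)))"
    unfolding Q_rep_mode_letter[OF assms]
    by (cases "m = 0") (simp_all add: Q_rep_def mode.sum sum_subtractf sum.distrib)
  also have "\<dots> \<in> NT" by (intro IndT.N_sum mode_Q_word)
  finally show ?thesis .
qed

lemma is_Qf_Q_rep: "is_Qf sh Ph B sr Pr rR ss Ps rS st Pt rT f Q_rep"
  unfolding is_Qf_def Let_def
proof (intro conjI allI impI)
  show "Q_rep r v - Q_rep r v' \<in> NT" if "fin_supp v \<and> fin_supp v' \<and> v - v' \<in> NS" for r v v'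
    using that Q_rep_ind_N[of "v - v'" r] by (simp add: Q_rep_diff)
  show "Q_rep r (fsc ss c v + v') - (fsc st c (Q_rep r v) + Q_rep r v') \<in> NT"
    if "fin_supp v \<and> fin_supp v'" for c r v v'
    using that by (simp add: Q_rep_add Q_rep_scale IndT.N_zero)
qed (simp_all add: Q_rep_linear_left Q_rep_vpar Q_rep_mode IndT.N_zero)

end

section \<open>Uniqueness\<close>

locale Qf_candidate = tensor_intertwiner +
  fixes q
  assumes Qf: "is_Qf sh Ph B sr Pr rR ss Ps rS st Pt rT f q"
begin

lemma q_cong: "fin_supp v \<Longrightarrow> fin_supp v' \<Longrightarrow> v - v' \<in> NS \<Longrightarrow> q r v - q r v' \<in> NT"
  using Qf unfolding is_Qf_def Let_def by blast

lemma q_linear_right: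
  "fin_supp v \<Longrightarrow> fin_supp v' \<Longrightarrow> q r (fsc ss c v + v') - (fsc st c (q r v) + q r v') \<in> NT"
  using Qf unfolding is_Qf_def Let_def by blast

lemma q_unit: "q r (tens [] s) - tens [] (f r s) \<in> NT"
  using Qf unfolding is_Qf_def Let_def by blast

lemma q_mode:
  "fin_supp v \<Longrightarrow> mode a m (q r v) - ((if m = 0 then q (rR a r) v else 0)
     + q r (mode (ea a) m v) + q (Pr r) (mode (oa a) m v)) \<in> NT"
  using Qf unfolding is_Qf_def Let_def by blast

lemma q_add: "fin_supp v \<Longrightarrow> fin_supp v' \<Longrightarrow> q r (v + v') - (q r v + q r v') \<in> NT"
  using q_linear_right[of v v' r 1] by simp

lemma q_zero: "q r 0 \<in> NT"
  using q_add[of 0 0 r] by (simp add: IndT.N_minus_iff)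

lemma q_ind_N:
  assumes "v \<in> NS"
  shows "q r v \<in> NT"
proof -
  have "q r v - q r 0 \<in> NT"
    using assms by (intro q_cong) (simp_all add: IndS.fin_supp_ind_N)
  then have "(q r v - q r 0) + q r 0 \<in> NT" by (rule IndT.N_add[OF _ q_zero])
  then show ?thesis by simp
qed

lemma q_sum:
  assumes "finite I" and "\<And>i. i \<in> I \<Longrightarrow> fin_supp (X i)"
  shows "q r (sum X I) - (\<Sum>i\<in>I. q r (X i)) \<in> NT"
  using assms
proof (induct I rule: finite_induct)
  case empty
  show "q r (sum X {}) - (\<Sum>i\<in>{}. q r (X i)) \<in> NT" using q_zero by simp
next
  case (insert i I)
  have "q r (X i + sum X I) - (q r (X i) + q r (sum X I)) \<in> NT"
    using insert.prems by (intro q_add) simp_all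
  moreover have "q r (sum X I) - (\<Sum>i\<in>I. q r (X i)) \<in> NT"
    by (rule insert.hyps(3)) (use insert.prems in simp)
  then have "(q r (X i) + q r (sum X I)) - (q r (X i) + (\<Sum>i\<in>I. q r (X i))) \<in> NT"
    by simp
  ultimately show "q r (sum X (insert i I)) - (\<Sum>i\<in>insert i I. q r (X i)) \<in> NT"
    using insert.hyps by (simp add: IndT.N_trans)
qed

text \<open>Split the letter into its even and odd part and apply property (2) to each.\<close>

lemma q_mode_step:
  assumes "fin_supp V"
  shows "q r (mode a m V) - Q_step a m (\<lambda>r. q r V) r \<in> NT"
proof -
  have split: "q r (mode a m V) - (q r (mode (ea a) m V) + q r (mode (oa a) m V)) \<in> NT"
    (is "?split \<in> _")
  proof -
    have "q r (mode a m V) - q r (mode (ea a) m V + mode (oa a) m V) \<in> NT"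
      using assms IndS.mode_add_letter[OF assms, of "ea a" "oa a" m]
      by (intro q_cong) (simp_all add: H.even_part_add_odd_part)
    moreover have "q r (mode (ea a) m V + mode (oa a) m V) - (q r (mode (ea a) m V) + q r (mode (oa a) m V)) \<in> NT"
      using assms by (intro q_add) simp_all
    ultimately show ?thesis by (rule IndT.N_trans)
  qed
  have even: "mode (ea a) m (q r V) - ((if m = 0 then q (rR (ea a) r) V else 0)
      + q r (mode (ea a) m V) + q (Pr r) (mode 0 m V)) \<in> NT" (is "?even \<in> _")
    using q_mode[OF assms, of "ea a" m r] by simp
  have odd: "mode (oa a) m (q (Pr r) V) - ((if m = 0 then q (rR (oa a) (Pr r)) V else 0)
      + q (Pr r) (mode 0 m V) + q r (mode (oa a) m V)) \<in> NT" (is "?odd \<in> _")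
    using q_mode[OF assms, of "oa a" m "Pr r"] by simp
  have zero: "q (Pr r) (mode 0 m V) \<in> NT" (is "?zero \<in> _")
    using assms by (intro q_ind_N IndS.mode_zero_letter)
  have "q r (mode a m V) - Q_step a m (\<lambda>r. q r V) r = ?split - ?even - ?odd - ?zero - ?zero"
    by (cases "m = 0") (simp_all add: Q_step_def algebra_simps)
  also have "\<dots> \<in> NT"
    using IndT.N_diff[OF IndT.N_diff[OF IndT.N_diff[OF IndT.N_diff[OF split even] odd] zero] zero] .
  finally show ?thesis .
qed

lemma q_tens: "q r (tens w s) - Q_word w r s \<in> NT"
proof (induct w arbitrary: r)
  case Nil
  show "q r (tens [] s) - Q_word [] r s \<in> NT" using q_unit by simp
next
  case (Cons x w)
  obtain a m where x: "x = (a, m)" by (cases x)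
  have "q r (tens (x # w) s) - Q_step a m (\<lambda>r. q r (tens w s)) r \<in> NT"
    using q_mode_step[of "tens w s" r a m] by (simp add: x mode_tens)
  moreover have "Q_step a m (\<lambda>r. q r (tens w s)) r - Q_word (x # w) r s \<in> NT"
    unfolding x Q_word.simps fst_conv snd_conv by (rule Q_step_cong) (rule Cons)
  ultimately show ?case by (rule IndT.N_trans)
qed

lemma Q_rep_unique:
  assumes "fin_supp v"
  shows "q r v - Q_rep r v \<in> NT"
proof -
  let ?A = "{u. v u \<noteq> 0}"
  have "finite ?A" using assms by (simp add: fin_supp_def)
  then have "q r (\<Sum>u\<in>?A. tens u (v u)) - (\<Sum>u\<in>?A. q r (tens u (v u))) \<in> NT"
    by (intro q_sum) simp_all
  moreover have "(\<Sum>u\<in>?A. q r (tens u (v u))) - Q_rep r v \<in> NT"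
    unfolding Q_rep_def sum_subtractf[symmetric] by (intro IndT.N_sum q_tens)
  ultimately have "q r (\<Sum>u\<in>?A. tens u (v u)) - Q_rep r v \<in> NT"
    by (rule IndT.N_trans)
  then show ?thesis by (simp flip: fin_supp_eq_sum_tens[OF assms])
qed

end

theorem lemma3p5:
  fixes sh :: "complex \<Rightarrow> 'h::ab_group_add \<Rightarrow> 'h" and Ph :: "'h \<Rightarrow> 'h"
    and B :: "'h \<Rightarrow> 'h \<Rightarrow> complex"
    and sr :: "complex \<Rightarrow> 'r::ab_group_add \<Rightarrow> 'r" and Pr :: "'r \<Rightarrow> 'r" and rR :: "'h \<Rightarrow> 'r \<Rightarrow> 'r"
    and ss :: "complex \<Rightarrow> 's::ab_group_add \<Rightarrow> 's" and Ps :: "'s \<Rightarrow> 's" and rS :: "'h \<Rightarrow> 's \<Rightarrow> 's"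
    and st :: "complex \<Rightarrow> 't::ab_group_add \<Rightarrow> 't" and Pt :: "'t \<Rightarrow> 't" and rT :: "'h \<Rightarrow> 't \<Rightarrow> 't"
    and f :: "'r \<Rightarrow> 's \<Rightarrow> 't"
  assumes "heis_data sh Ph B"
    and "h_module sh Ph sr Pr rR"
    and "h_module sh Ph ss Ps rS"
    and "h_module sh Ph st Pt rT"
    and "even_intertwiner sh Ph sr Pr rR ss Ps rS st Pt rT f"
  shows "\<exists>q. is_Qf sh Ph B sr Pr rR ss Ps rS st Pt rT f q \<and>
           (\<forall>q'. is_Qf sh Ph B sr Pr rR ss Ps rS st Pt rT f q' \<longrightarrow>
              (\<forall>r v. fin_supp v \<longrightarrow> q' r v - q r v \<in> ind_N sh Ph B st rT))"
proof -
  interpret tensor_intertwiner sh Ph B sr Pr rR ss Ps rS st Pt rT f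
    by unfold_locales fact+
  show ?thesis
  proof (intro exI conjI allI impI)
    show "is_Qf sh Ph B sr Pr rR ss Ps rS st Pt rT f Q_rep" by (rule is_Qf_Q_rep)
    fix q' r and v :: "'h word \<Rightarrow> 's"
    assume "is_Qf sh Ph B sr Pr rR ss Ps rS st Pt rT f q'" and "fin_supp v"
    then interpret Qf_candidate sh Ph B sr Pr rR ss Ps rS st Pt rT f q'
      by unfold_locales
    show "q' r v - Q_rep r v \<in> ind_N sh Ph B st rT"
      by (rule Q_rep_unique) fact
  qed
qed

end
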